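(* Let $M\ge2$ and $\mathfrak{F}_M=\{\pi/M,2\pi/M,\dots,(M-1)\pi/M\}$. Let $K=\kappa^N$ be a complex parameter and, for $\phi\in\mathfrak{F}_M$, set (with a fixed choice of square root) $$\Delta_\phi=e^{i\phi}\big(\sqrt{\cos^2\phi+K}+\cos\phi\big),\quad \Delta^*_\phi=e^{-i\phi}\big(\sqrt{\cos^2\phi+K}+\cos\phi\big),\quad \Lambda_\phi=\Delta_\phi\Delta^*_\phi .$$ Let $1\le n\le M-1$ and let $\phi_1,\dots,\phi_n$ be distinct elements of $\mathfrak{F}_M$; write $\Delta_k=\Delta_{\phi_k}$, $\Delta_k^*=\Delta^*_{\phi_k}$, $\Lambda_k=\Lambda_{\phi_k}$, and assume $K$ and $\xi\in\mathbb{C}$ are generic so that all denominators below are nonzero. Define the phase shifts $d_{j,k}=\frac{(\Delta_j-\Delta_k)(\Delta_j^*-\Delta_k^* )}{(\Delta_j-\Delta_k^* )(\Delta_j^*-\Delta_k)}$, and for amplitudes $f_1,\dots,f_n$ and integer $m$ define recursively $\Theta^{(0)}_m=1$ and $$\Theta^{(n)}_m(\{f_k,\phi_k\}_{k=1}^n)=\Theta^{(n-1)}_m(\{f_k,\phi_k\}_{k=1}^{n-1})-f_n e^{2im\phi_n}\,\Theta^{(n-1)}_m(\{d_{k,n}f_k,\phi_k\}_{k=1}^{n-1}).$$ Let $s_k(\xi)=\frac{\Delta_k^*}{\Delta_k}\frac{\Delta_k-\xi}{\Delta_k^*-\xi}$, $s_{k,j}=s_k(\Delta_j^* )$, and define $\Theta^{(n)}_m(\xi)=\Theta^{(n)}_m(\{f_k,\phi_k\}_{k=1}^n)$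 with $f_k=s_k(\xi)\prod_{j=1,\,j\ne k}^n s_{k,j}$. Then $$\Theta^{(n)}_n(\xi)=\prod_{k=1}^n\frac{\Delta_k^*-\Delta_k}{\Delta_k^*-\xi}\prod_{1\le j<k\le n}\frac{\Lambda_j-\Lambda_k}{\Delta_j^*-\Delta_k^*},$$ and for $m=0,1,\dots,n$ $$\Theta^{(n)}_m(\xi)=(-K)^{(n-m)(n-m-1)/2}\left(\frac{\xi}{\Delta_1\cdots\Delta_n}\right)^{n-m}\Theta^{(n)}_n(\xi).$$ Moreover, if $\xi=1$, the last formula also holds for $m=-1$.
   Context: Here $\Delta_\phi,\Delta^*_\phi$ parametrize the curve $\Delta\Delta^*=\Delta+\Delta^*+\kappa^N$ with $e^{2i\phi}=\Delta/\Delta^*$ (this holds for either choice of the square root). In the recursion, the functions $\Theta^{(n-1)}_m$ are evaluated at the modified amplitude lists indicated (the amplitudes are treated as formal arguments). *)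

theory Defs
  imports Complex_Main
begin

text \<open>Delta_phi and Delta^*_phi, given a square root r of cos^2 phi + K.\<close>
definition Dlt :: "real \<Rightarrow> complex \<Rightarrow> complex" where
  "Dlt \<phi> r = exp (\<i> * of_real \<phi>) * (r + of_real (cos \<phi>))"

definition Dlts :: "real \<Rightarrow> complex \<Rightarrow> complex" where
  "Dlts \<phi> r = exp (- \<i> * of_real \<phi>) * (r + of_real (cos \<phi>))"

definition dsh :: "(nat \<Rightarrow> complex) \<Rightarrow> (nat \<Rightarrow> complex) \<Rightarrow> nat \<Rightarrow> nat \<Rightarrow> complex" where
  "dsh D Ds j k = ((D j - D k) * (Ds j - Ds k)) / ((D j - Ds k) * (Ds j - D k))"

text \<open>Theta^{(n)}_m({f_k, phi_k}_{k=1}^n); amplitudes f indexed 1..n.\<close>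
fun Theta :: "(nat \<Rightarrow> complex) \<Rightarrow> (nat \<Rightarrow> complex) \<Rightarrow> (nat \<Rightarrow> real) \<Rightarrow> nat \<Rightarrow> int
              \<Rightarrow> (nat \<Rightarrow> complex) \<Rightarrow> complex" where
  "Theta D Ds \<phi> 0 m f = 1"
| "Theta D Ds \<phi> (Suc n) m f =
     Theta D Ds \<phi> n m f
     - f (Suc n) * exp (2 * \<i> * of_int m * of_real (\<phi> (Suc n)))
       * Theta D Ds \<phi> n m (\<lambda>k. dsh D Ds k (Suc n) * f k)"

definition sfun :: "(nat \<Rightarrow> complex) \<Rightarrow> (nat \<Rightarrow> complex) \<Rightarrow> nat \<Rightarrow> complex \<Rightarrow> complex" where
  "sfun D Ds k \<xi> = (Ds k / D k) * ((D k - \<xi>) / (Ds k - \<xi>))"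

definition ampl :: "(nat \<Rightarrow> complex) \<Rightarrow> (nat \<Rightarrow> complex) \<Rightarrow> nat \<Rightarrow> complex \<Rightarrow> nat \<Rightarrow> complex" where
  "ampl D Ds n \<xi> k = sfun D Ds k \<xi> * (\<Prod>j\<in>{1..n} - {k}. sfun D Ds k (Ds j))"

end

theory Submission
  imports Defs "Jordan_Normal_Form.Determinant"
begin

(* Expanding the recursion writes Theta_m as a signed sum over subsets S of {1..n}. For the
   amplitudes f_k the pair factors telescope, by a Cauchy-type identity, into a ratio of
   Vandermonde products V(c_S) / V(Delta*_1, ..., Delta*_n), where c_S equals Delta_k on S and
   Delta*_k off S. Hence the subset sum is the multilinear expansion of the single determinant
   det [beta_k (Delta*_k)^i - alpha_k (Delta_k)^i], with alpha, beta depending on p = n - m.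
   On the curve Delta Delta* = Delta + Delta* + K every entry is (Delta*_k - Delta_k) P_i(Lambda_k)
   for polynomials P_i of degree < n, so the determinant factors as
   prod (Delta*_k - Delta_k) * V(Lambda_1, ..., Lambda_n) * det (coefficients of the P_i), and the
   coefficient matrix is triangular up to a reordering of the rows, with determinant
   xi^p (-K)^(p(p-1)/2). Comparing p with p = 0 gives the ratios; when xi = 1 the degree bound
   survives for p = n + 1, i.e. m = -1. *)

section \<open>Determinant identities\<close>

lemma det_mat_scale_rows:
  "det (mat n n (\<lambda>(k,i). c k * A k i)) = (\<Prod>k<n. c k) * det (mat n n (\<lambda>(k,i). A k i))"
proof -
  have "mat n n (\<lambda>(k,i). c k * A k i) = mat\<^sub>r n n (\<lambda>k. c k \<cdot>\<^sub>v vec n (A k))"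
    by (rule eq_matI) auto
  moreover have "mat n n (\<lambda>(k,i). A k i) = mat\<^sub>r n n (\<lambda>k. vec n (A k))"
    by (rule eq_matI) auto
  ultimately show ?thesis
    by (simp add: det_rows_mul atLeast0LessThan)
qed

lemma det_unit_first_row:
  fixes A :: "'a::comm_ring_1 mat"
  assumes A: "A \<in> carrier_mat (Suc n) (Suc n)"
    and row0: "\<And>j. j < Suc n \<Longrightarrow> A $$ (0, j) = (if j = 0 then 1 else 0)"
  shows "det A = det (mat n n (\<lambda>(i,j). A $$ (Suc i, Suc j)))"
proof -
  have "det A = (\<Sum>j<Suc n. A $$ (0, j) * cofactor A 0 j)"
    by (rule laplace_expansion_row[OF A]) simp
  also have "\<dots> = (\<Sum>j<Suc n. if j = 0 then cofactor A 0 0 else 0)"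
    using row0 by (intro sum.cong) auto
  also have "\<dots> = cofactor A 0 0"
    by simp
  also have "mat_delete A 0 0 = mat n n (\<lambda>(i,j). A $$ (Suc i, Suc j))"
    using A by (intro eq_matI) (auto simp: mat_delete_def insert_index_def)
  then have "cofactor A 0 0 = det (mat n n (\<lambda>(i,j). A $$ (Suc i, Suc j)))"
    by (simp add: cofactor_def)
  finally show ?thesis .
qed

lemma det_vandermonde_mat:
  "det (mat n n (\<lambda>(k,i). (x k :: 'a::comm_ring_1) ^ i)) = (\<Prod>k<n. \<Prod>j<k. x k - x j)"
proof (induction n arbitrary: x)
  case 0
  then show ?case by simp
next
  case (Suc m)
  define V where "V = mat (Suc m) (Suc m) (\<lambda>(k,i). x k ^ i)"
  \<comment> \<open>column operations: column i minus x 0 times column i - 1\<close>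
  define U where "U = mat (Suc m) (Suc m)
    (\<lambda>(l,i). if l = i then 1 else if Suc l = i then - x 0 else (0::'a))"
  have V: "V \<in> carrier_mat (Suc m) (Suc m)" and U: "U \<in> carrier_mat (Suc m) (Suc m)"
    unfolding V_def U_def by auto
  have "det U = prod_list (diag_mat U)"
    by (rule det_upper_triangular[OF _ U]) (auto simp: U_def upper_triangular_def)
  then have detU: "det U = 1"
    by (simp add: prod_list_diag_prod U_def)
  have VU: "(V * U) $$ (k,i) = (if i = 0 then 1 else (x k - x 0) * x k ^ (i - 1))"
    if "k < Suc m" "i < Suc m" for k i
  proof -
    have "(V * U) $$ (k,i) =
        (\<Sum>l<Suc m. (if l = i then x k ^ l else 0) - (if Suc l = i then x 0 * x k ^ l else 0))"
      using that by (auto simp: V_def U_def scalar_prod_def atLeast0LessThan intro!: sum.cong)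
    also have "\<dots> = (if i = 0 then 1 else (x k - x 0) * x k ^ (i - 1))"
      using that by (cases i) (simp_all add: sum_subtractf algebra_simps, metis Suc_lessI power_Suc)
    finally show ?thesis .
  qed
  have "det V = det (V * U)"
    using det_mult[OF V U] detU by simp
  also have "\<dots> = det (mat m m (\<lambda>(i,j). (V * U) $$ (Suc i, Suc j)))"
    by (rule det_unit_first_row) (use V U in \<open>simp_all del: index_mult_mat add: VU\<close>)
  also have "mat m m (\<lambda>(i,j). (V * U) $$ (Suc i, Suc j)) =
      mat m m (\<lambda>(k,i). (x (Suc k) - x 0) * x (Suc k) ^ i)"
    by (rule eq_matI) (simp_all del: index_mult_mat add: VU)
  also have "det \<dots> = (\<Prod>k<m. x (Suc k) - x 0) * (\<Prod>k<m. \<Prod>j<k. x (Suc k) - x (Suc j))"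
    using Suc.IH[of "\<lambda>k. x (Suc k)"] by (simp add: det_mat_scale_rows)
  also have "\<dots> = (\<Prod>k<Suc m. \<Prod>j<k. x k - x j)"
    by (simp add: prod.lessThan_Suc_shift prod.distrib del: prod.lessThan_Suc)
  finally show ?case
    unfolding V_def .
qed

lemma det_mat_shifted_rows_leibniz:
  "det (mat n n (\<lambda>(k,i). F (Suc k) i)) =
    (\<Sum>p | p permutes {0..<n}. signof p * (\<Prod>k\<in>{1..n}. F k (p (k - 1))))"
proof -
  have "(\<Prod>i = 0..<n. mat n n (\<lambda>(k,i). F (Suc k) i) $$ (i, p i)) = (\<Prod>k\<in>{1..n}. F k (p (k - 1)))"
    if "p permutes {0..<n}" for p
  proof -
    have "(\<Prod>i = 0..<n. mat n n (\<lambda>(k,i). F (Suc k) i) $$ (i, p i)) = (\<Prod>i<n. F (Suc i) (p i))"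
      using permutes_in_image[OF that] by (auto simp: atLeast0LessThan intro!: prod.cong)
    then show ?thesis
      by (simp add: prod.atLeast1_atMost_eq)
  qed
  then show ?thesis
    unfolding det_def'[OF mat_carrier] by (intro sum.cong) auto
qed

lemma det_mat_rows_diff_expand:
  "det (mat n n (\<lambda>(k,i). u (Suc k) i - v (Suc k) i)) =
    (\<Sum>S\<in>Pow {1..n}. (-1) ^ card S *
      det (mat n n (\<lambda>(k,i). if Suc k \<in> S then v (Suc k) i else u (Suc k) i)))"
proof -
  let ?N = "{1..n}" and ?P = "{p. p permutes {0..<n}}"
  have "det (mat n n (\<lambda>(k,i). u (Suc k) i - v (Suc k) i)) =
      (\<Sum>p\<in>?P. signof p * (\<Sum>S\<in>Pow ?N. (-1) ^ card S *
        (\<Prod>k\<in>?N. if k \<in> S then v k (p (k - 1)) else u k (p (k - 1)))))"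
    unfolding det_mat_shifted_rows_leibniz[of n "\<lambda>k i. u k i - v k i"]
      prod_diff_conv_sum[OF finite_atLeastAtMost]
    by (intro sum.cong refl arg_cong[where f = "\<lambda>x. _ * x"])
      (auto simp: prod.If_cases Int_absorb1 Diff_eq mult.assoc)
  also have "\<dots> = (\<Sum>S\<in>Pow ?N. (-1) ^ card S *
      det (mat n n (\<lambda>(k,i). if Suc k \<in> S then v (Suc k) i else u (Suc k) i)))"
    unfolding det_mat_shifted_rows_leibniz[of n "\<lambda>k i. if k \<in> _ then v k i else u k i"]
      sum_distrib_left
    by (subst sum.swap) (simp add: ac_simps)
  finally show ?thesis .
qed

lemma permutes_eq_id_if_rank_increasing:
  fixes \<rho> :: "'a \<Rightarrow> nat"
  assumes p: "p permutes A" and A: "finite A" and inj: "inj_on \<rho> A"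
    and incr: "\<And>i. i \<in> A \<Longrightarrow> \<rho> i \<le> \<rho> (p i)"
  shows "p = id"
proof
  fix i
  show "p i = id i"
  proof (cases "i \<in> A")
    case True
    have "sum (\<rho> \<circ> p) A = sum \<rho> A"
      using sum.permute[OF p, of \<rho>] by simp
    then have "\<rho> i = \<rho> (p i)"
      using sum_mono_inv[of \<rho> A "\<rho> \<circ> p" i] incr True A by simp
    from inj_onD[OF inj this[symmetric]] show ?thesis
      using True permutes_in_image[OF p] by simp
  next
    case False
    then show ?thesis
      using permutes_not_in[OF p] by simp
  qed
qed

lemma det_mat_eq_prod_diag_if_triangular_wrt:
  fixes C :: "nat \<Rightarrow> nat \<Rightarrow> 'a::comm_ring_1" and \<rho> :: "nat \<Rightarrow> nat"
  assumes inj: "inj_on \<rho> {0..<n}"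
    and triangular: "\<And>l i. l < n \<Longrightarrow> i < n \<Longrightarrow> C l i \<noteq> 0 \<Longrightarrow> \<rho> l \<le> \<rho> i"
  shows "det (mat n n (\<lambda>(l,i). C l i)) = (\<Prod>l<n. C l l)"
proof -
  let ?P = "{p. p permutes {0..<n}}"
  let ?term = "\<lambda>p. signof p * (\<Prod>i = 0..<n. mat n n (\<lambda>(l,i). C l i) $$ (i, p i))"
  have "?term p = 0" if p: "p \<in> ?P - {id}" for p
  proof -
    have "\<exists>i<n. C i (p i) = 0"
    proof (rule ccontr)
      assume "\<not> ?thesis"
      then have "p = id"
        using p triangular permutes_in_image[of p "{0..<n}"]
        by (intro permutes_eq_id_if_rank_increasing[of p "{0..<n}" \<rho>]) (auto simp: inj)
      with p show False by simp
    qed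
    then obtain i where i: "i < n" "C i (p i) = 0"
      by blast
    moreover have "p i < n"
      using p i permutes_in_image[of p "{0..<n}" i] by simp
    ultimately have "\<exists>j\<in>{0..<n}. mat n n (\<lambda>(l,i). C l i) $$ (j, p j) = 0"
      by (intro bexI[of _ i]) simp_all
    then show ?thesis
      by (simp add: prod_zero)
  qed
  then have "det (mat n n (\<lambda>(l,i). C l i)) = ?term id"
    unfolding det_def'[OF mat_carrier]
    by (subst sum.remove[of ?P id]) (auto simp: permutes_id finite_permutations)
  then show ?thesis
    by (simp add: atLeast0LessThan)
qed

lemma poly_eq_sum_coeff_lessThan:
  fixes p :: "'a::comm_semiring_1 poly"
  assumes "degree p < n"
  shows "poly p x = (\<Sum>l<n. coeff p l * x ^ l)"
  unfolding poly_altdef using assms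
  by (intro sum.mono_neutral_left) (auto simp: coeff_eq_0)

lemma det_mat_poly_eval:
  fixes P :: "nat \<Rightarrow> 'a::comm_ring_1 poly"
  assumes deg: "\<And>i. i < n \<Longrightarrow> degree (P i) < n"
  shows "det (mat n n (\<lambda>(k,i). poly (P i) (x k))) =
    det (mat n n (\<lambda>(k,i). x k ^ i)) * det (mat n n (\<lambda>(l,i). coeff (P i) l))"
proof -
  have "mat n n (\<lambda>(k,i). poly (P i) (x k)) =
      mat n n (\<lambda>(k,i). x k ^ i) * mat n n (\<lambda>(l,i). coeff (P i) l)"
    using deg by (intro eq_matI)
      (auto simp: scalar_prod_def atLeast0LessThan poly_eq_sum_coeff_lessThan mult.commute)
  then show ?thesis
    by (simp add: det_mult[of _ n])
qed

definition vandermonde :: "nat \<Rightarrow> (nat \<Rightarrow> 'a::comm_ring_1) \<Rightarrow> 'a" where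
  "vandermonde n x = (\<Prod>k\<in>{1..n}. \<Prod>j\<in>{1..<k}. x k - x j)"

lemma vandermonde_eq_det: "vandermonde n x = det (mat n n (\<lambda>(k,i). x (Suc k) ^ i))"
proof -
  have "vandermonde n x = (\<Prod>k<n. \<Prod>j\<in>{Suc 0..<Suc k}. x (Suc k) - x j)"
    unfolding vandermonde_def by (simp add: prod.atLeast1_atMost_eq)
  also have "\<dots> = (\<Prod>k<n. \<Prod>j<k. x (Suc k) - x (Suc j))"
    by (simp only: prod.shift_bounds_Suc_ivl atLeast0LessThan)
  finally show ?thesis
    by (simp add: det_vandermonde_mat)
qed

lemma vandermonde_nonzero:
  fixes x :: "nat \<Rightarrow> 'a::idom"
  assumes "\<forall>j\<in>{1..n}. \<forall>k\<in>{1..n}. j \<noteq> k \<longrightarrow> x j \<noteq> x k"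
  shows "vandermonde n x \<noteq> 0"
  using assms unfolding vandermonde_def by (auto simp: prod_zero_iff)

lemma prod_upper_pairs_eq_lower_pairs:
  fixes n :: nat
  shows "(\<Prod>j\<in>{1..n}. \<Prod>k\<in>{j<..n}. g j k) = (\<Prod>k\<in>{1..n}. \<Prod>j\<in>{1..<k}. g j k)"
proof -
  have "(\<Prod>j\<in>{1..n}. \<Prod>k\<in>{j<..n}. g j k) = (\<Prod>j\<in>{1..n}. \<Prod>k | k \<in> {1..n} \<and> j < k. g j k)"
    by (rule prod.cong[OF refl], rule prod.cong) auto
  also have "\<dots> = (\<Prod>k\<in>{1..n}. \<Prod>j | j \<in> {1..n} \<and> j < k. g j k)"
    by (rule prod.swap_restrict) auto
  also have "\<dots> = (\<Prod>k\<in>{1..n}. \<Prod>j\<in>{1..<k}. g j k)"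
    by (rule prod.cong[OF refl], rule prod.cong) auto
  finally show ?thesis .
qed

lemma vandermonde_divide:
  fixes x y :: "nat \<Rightarrow> 'a::field"
  shows "vandermonde n x / vandermonde n y = (\<Prod>j\<in>{1..n}. \<Prod>k\<in>{j<..n}. (x j - x k) / (y j - y k))"
  unfolding vandermonde_def prod_upper_pairs_eq_lower_pairs prod_dividef[symmetric]
  by (rule prod.cong[OF refl], rule prod.cong[OF refl]) (metis minus_diff_eq minus_divide_divide)

lemma prod_distinct_pairs:
  fixes n :: nat
  shows "(\<Prod>k\<in>{1..n}. \<Prod>j\<in>{1..n} - {k}. g k j) =
    (\<Prod>k\<in>{1..n}. \<Prod>j\<in>{1..<k}. g k j * (g j k :: 'a::comm_monoid_mult))"
proof -
  have "(\<Prod>j\<in>{1..n} - {k}. g k j) = (\<Prod>j\<in>{1..<k}. g k j) * (\<Prod>j\<in>{k<..n}. g k j)"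
    if "k \<in> {1..n}" for k
  proof -
    have "{1..n} - {k} = {1..<k} \<union> {k<..n}"
      using that by auto
    moreover have "prod (g k) ({1..<k} \<union> {k<..n}) = prod (g k) {1..<k} * prod (g k) {k<..n}"
      by (rule prod.union_disjoint) auto
    ultimately show ?thesis
      by simp
  qed
  then have "(\<Prod>k\<in>{1..n}. \<Prod>j\<in>{1..n} - {k}. g k j) =
      (\<Prod>k\<in>{1..n}. \<Prod>j\<in>{1..<k}. g k j) * (\<Prod>k\<in>{1..n}. \<Prod>j\<in>{k<..n}. g k j)"
    by (simp add: prod.distrib)
  also have "(\<Prod>k\<in>{1..n}. \<Prod>j\<in>{k<..n}. g k j) = (\<Prod>k\<in>{1..n}. \<Prod>j\<in>{1..<k}. g j k)"
    by (rule prod_upper_pairs_eq_lower_pairs)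
  finally show ?thesis
    by (simp add: prod.distrib)
qed

lemma cauchy_pair_product:
  fixes x y :: "nat \<Rightarrow> complex"
  assumes nz: "\<forall>j\<in>{1..n}. \<forall>k\<in>{1..n}. j \<noteq> k \<longrightarrow> x j \<noteq> y k \<and> y j \<noteq> y k"
  shows "(\<Prod>k\<in>{1..n}. \<Prod>j\<in>{1..n} - {k}. (x k - y j) / (y k - y j))
      * (\<Prod>k\<in>{1..n}. \<Prod>j\<in>{1..<k}. dsh x y j k) = vandermonde n x / vandermonde n y"
proof -
  have pair: "(x k - y j) / (y k - y j) * ((x j - y k) / (y j - y k)) * dsh x y j k
      = (x k - x j) / (y k - y j)" if "k \<in> {1..n}" "j \<in> {1..<k}" for j k
  proof -
    have "x j \<noteq> y k" "x k \<noteq> y j" "y j \<noteq> y k"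
      using nz[rule_format, of j k] nz[rule_format, of k j] that by auto
    then show ?thesis
      unfolding dsh_def by (simp add: divide_simps) (simp add: algebra_simps)
  qed
  show ?thesis
    unfolding prod_distinct_pairs vandermonde_def prod.distrib[symmetric] prod_dividef[symmetric]
    by (rule prod.cong[OF refl], rule prod.cong[OF refl], rule pair) auto
qed

section \<open>Subset expansion of Theta\<close>

definition phase :: "(nat \<Rightarrow> real) \<Rightarrow> int \<Rightarrow> nat \<Rightarrow> complex" where
  "phase \<phi> m k = exp (2 * \<i> * of_int m * of_real (\<phi> k))"

lemma Theta_eq_sum_subsets:
  "Theta D Ds \<phi> n m f =
    (\<Sum>S\<in>Pow {1..n}. (-1) ^ card S * (\<Prod>k\<in>S. f k * phase \<phi> m k)
      * (\<Prod>k\<in>S. \<Prod>j\<in>S \<inter> {..<k}. dsh D Ds j k))"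
proof (induction n arbitrary: f)
  case 0
  then show ?case by simp
next
  case (Suc n)
  let ?t = "\<lambda>f S. (-1::complex) ^ card S * (\<Prod>k\<in>S. f k * phase \<phi> m k)
    * (\<Prod>k\<in>S. \<Prod>j\<in>S \<inter> {..<k}. dsh D Ds j k)"
  let ?g = "\<lambda>k. dsh D Ds k (Suc n) * f k"
  have Pow_Suc: "Pow {1..Suc n} = Pow {1..n} \<union> insert (Suc n) ` Pow {1..n}"
    by (simp add: atLeastAtMostSuc_conv Pow_insert)
  have inj: "inj_on (insert (Suc n)) (Pow {1..n})"
    by (rule inj_onI)
      (metis Pow_iff atLeastAtMost_iff insert_ident not_less_eq_eq order_refl subset_iff)
  have insert_term: "?t f (insert (Suc n) T) = - (f (Suc n) * phase \<phi> m (Suc n)) * ?t ?g T"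
    if T: "T \<in> Pow {1..n}" for T
  proof -
    have fin: "finite T" and new: "Suc n \<notin> T"
      using T finite_subset by auto
    have "insert (Suc n) T \<inter> {..<Suc n} = T"
      and "\<And>k. k \<in> T \<Longrightarrow> insert (Suc n) T \<inter> {..<k} = T \<inter> {..<k}"
      using T by auto
    then have "(\<Prod>k\<in>insert (Suc n) T. \<Prod>j\<in>insert (Suc n) T \<inter> {..<k}. dsh D Ds j k)
        = (\<Prod>j\<in>T. dsh D Ds j (Suc n)) * (\<Prod>k\<in>T. \<Prod>j\<in>T \<inter> {..<k}. dsh D Ds j k)"
      using fin new by simp
    then show ?thesis
      using fin new by (simp add: prod.distrib algebra_simps)
  qed
  have "Theta D Ds \<phi> (Suc n) m f =
      (\<Sum>S\<in>Pow {1..n}. ?t f S) - f (Suc n) * phase \<phi> m (Suc n) * (\<Sum>S\<in>Pow {1..n}. ?t ?g S)"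
    using Suc.IH[of f] Suc.IH[of ?g] by (simp add: phase_def)
  also have "\<dots> = (\<Sum>S\<in>Pow {1..n}. ?t f S) + (\<Sum>S\<in>insert (Suc n) ` Pow {1..n}. ?t f S)"
    by (subst sum.reindex[OF inj]) (simp add: insert_term sum_distrib_left sum_negf)
  also have "\<dots> = (\<Sum>S\<in>Pow {1..Suc n}. ?t f S)"
    unfolding Pow_Suc by (rule sum.union_disjoint[symmetric]) auto
  finally show ?case .
qed

lemma ampl_pair_product:
  fixes a b :: "nat \<Rightarrow> complex" and S :: "nat set"
  defines "c \<equiv> \<lambda>k. if k \<in> S then a k else b k"
  assumes S: "S \<subseteq> {1..n}"
    and nz: "\<forall>j\<in>{1..n}. \<forall>k\<in>{1..n}. j \<noteq> k \<longrightarrow> a j \<noteq> b k \<and> b j \<noteq> b k"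
  shows "(\<Prod>k\<in>S. \<Prod>j\<in>{1..n} - {k}. sfun a b k (b j)) * (\<Prod>k\<in>S. \<Prod>j\<in>S \<inter> {..<k}. dsh a b j k)
    = (\<Prod>k\<in>S. (b k / a k) ^ (n - 1)) * (vandermonde n c / vandermonde n b)"
proof -
  let ?N = "{1..n}"
  let ?R = "\<lambda>k. \<Prod>j\<in>?N - {k}. (c k - b j) / (b k - b j)"
  have sfun_row: "(\<Prod>j\<in>?N - {k}. sfun a b k (b j)) = (b k / a k) ^ (n - 1) * ?R k" if "k \<in> S" for k
  proof -
    have "(\<Prod>j\<in>?N - {k}. sfun a b k (b j)) = (\<Prod>j\<in>?N - {k}. b k / a k) * ?R k"
      unfolding prod.distrib[symmetric] using that
      by (intro prod.cong) (simp_all add: sfun_def c_def)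
    then show ?thesis
      using that S by (auto simp: card_Diff_singleton)
  qed
  have "(\<Prod>k\<in>S. \<Prod>j\<in>?N - {k}. sfun a b k (b j)) = (\<Prod>k\<in>S. (b k / a k) ^ (n - 1) * ?R k)"
    by (rule prod.cong[OF refl]) (rule sfun_row)
  also have "\<dots> = (\<Prod>k\<in>S. (b k / a k) ^ (n - 1)) * (\<Prod>k\<in>S. ?R k)"
    by (rule prod.distrib)
  also have "(\<Prod>k\<in>S. ?R k) = (\<Prod>k\<in>?N. ?R k)"
    using S nz by (intro prod.mono_neutral_left prod.neutral) (auto simp: c_def)
  finally have rows: "(\<Prod>k\<in>S. \<Prod>j\<in>?N - {k}. sfun a b k (b j)) =
      (\<Prod>k\<in>S. (b k / a k) ^ (n - 1)) * (\<Prod>k\<in>?N. ?R k)" .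
  have "dsh c b j k = (if j \<in> S \<and> k \<in> S then dsh a b j k else 1)"
    if "k \<in> ?N" "j \<in> {1..<k}" for j k
    using that S nz[rule_format, of j k] nz[rule_format, of k j]
    by (auto simp: c_def dsh_def)
  then have "(\<Prod>k\<in>?N. \<Prod>j\<in>{1..<k}. dsh c b j k) =
      (\<Prod>k\<in>?N. if k \<in> S then \<Prod>j\<in>{1..<k}. if j \<in> S then dsh a b j k else 1 else 1)"
    by (auto intro!: prod.cong)
  also have "\<dots> = (\<Prod>k\<in>S. \<Prod>j\<in>S \<inter> {..<k}. dsh a b j k)"
  proof -
    have "?N \<inter> S = S" "\<And>k. {1..<k} \<inter> S = S \<inter> {..<k}"
      using S by auto
    then show ?thesis
      by (simp only: prod.inter_restrict[symmetric] finite_atLeastAtMost finite_atLeastLessThan)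
  qed
  finally have pairs: "(\<Prod>k\<in>S. \<Prod>j\<in>S \<inter> {..<k}. dsh a b j k) = (\<Prod>k\<in>?N. \<Prod>j\<in>{1..<k}. dsh c b j k)"
    by simp
  have "\<forall>j\<in>?N. \<forall>k\<in>?N. j \<noteq> k \<longrightarrow> c j \<noteq> b k \<and> b j \<noteq> b k"
    using nz by (auto simp: c_def)
  from cauchy_pair_product[OF this] show ?thesis
    unfolding rows pairs by (simp add: ac_simps)
qed

lemma det_mat_weighted_rows_diff:
  "det (mat n n (\<lambda>(k,i). \<beta> (Suc k) * b (Suc k) ^ i - \<alpha> (Suc k) * a (Suc k) ^ i)) =
    (\<Sum>S\<in>Pow {1..n}. (-1) ^ card S * (\<Prod>k\<in>S. \<alpha> k) * (\<Prod>k\<in>{1..n} - S. \<beta> k)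
      * vandermonde n (\<lambda>k. if k \<in> S then a k else b k))"
proof -
  have "det (mat n n (\<lambda>(k,i). if Suc k \<in> S then \<alpha> (Suc k) * a (Suc k) ^ i
      else \<beta> (Suc k) * b (Suc k) ^ i))
      = (\<Prod>k\<in>S. \<alpha> k) * (\<Prod>k\<in>{1..n} - S. \<beta> k) * vandermonde n (\<lambda>k. if k \<in> S then a k else b k)"
    if S: "S \<subseteq> {1..n}" for S
  proof -
    let ?w = "\<lambda>k. if k \<in> S then \<alpha> k else \<beta> k" and ?c = "\<lambda>k. if k \<in> S then a k else b k"
    have "mat n n (\<lambda>(k,i). if Suc k \<in> S then \<alpha> (Suc k) * a (Suc k) ^ i
        else \<beta> (Suc k) * b (Suc k) ^ i)
        = mat n n (\<lambda>(k,i). ?w (Suc k) * ?c (Suc k) ^ i)"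
      by (rule eq_matI) auto
    then have "det (mat n n (\<lambda>(k,i). if Suc k \<in> S then \<alpha> (Suc k) * a (Suc k) ^ i
        else \<beta> (Suc k) * b (Suc k) ^ i)) = (\<Prod>k<n. ?w (Suc k)) * vandermonde n ?c"
      by (simp add: det_mat_scale_rows[of n "\<lambda>k. ?w (Suc k)"] vandermonde_eq_det)
    also have "(\<Prod>k<n. ?w (Suc k)) = (\<Prod>k\<in>{1..n}. ?w k)"
      using prod.atLeast1_atMost_eq[of ?w n] by simp
    also have "\<dots> = (\<Prod>k\<in>S. \<alpha> k) * (\<Prod>k\<in>{1..n} - S. \<beta> k)"
      using S by (simp add: prod.If_cases Int_absorb1 Diff_eq)
    finally show ?thesis .
  qed
  then show ?thesis
    unfolding det_mat_rows_diff_expand[of n "\<lambda>k i. \<beta> k * b k ^ i" "\<lambda>k i. \<alpha> k * a k ^ i"]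
    by (intro sum.cong refl) (simp add: mult.assoc)
qed

lemma Theta_ampl_eq_det:
  fixes a b \<alpha> \<beta> :: "nat \<Rightarrow> complex"
  assumes nz: "\<forall>j\<in>{1..n}. \<forall>k\<in>{1..n}. j \<noteq> k \<longrightarrow> a j \<noteq> b k \<and> b j \<noteq> b k"
    and \<beta>0: "\<forall>k\<in>{1..n}. \<beta> k \<noteq> 0"
    and weight: "\<forall>k\<in>{1..n}. sfun a b k \<xi> * phase \<phi> m k * (b k / a k) ^ (n - 1) = \<alpha> k / \<beta> k"
  shows "Theta a b \<phi> n m (ampl a b n \<xi>) * (\<Prod>k\<in>{1..n}. \<beta> k) * vandermonde n b =
    det (mat n n (\<lambda>(k,i). \<beta> (Suc k) * b (Suc k) ^ i - \<alpha> (Suc k) * a (Suc k) ^ i))"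
proof -
  let ?N = "{1..n}"
  have Vb: "vandermonde n b \<noteq> 0"
    using nz by (intro vandermonde_nonzero) blast
  have "(\<Prod>k\<in>S. ampl a b n \<xi> k * phase \<phi> m k) * (\<Prod>k\<in>S. \<Prod>j\<in>S \<inter> {..<k}. dsh a b j k)
      * (\<Prod>k\<in>?N. \<beta> k) * vandermonde n b
      = (\<Prod>k\<in>S. \<alpha> k) * (\<Prod>k\<in>?N - S. \<beta> k) * vandermonde n (\<lambda>k. if k \<in> S then a k else b k)"
    if S: "S \<subseteq> ?N" for S
  proof -
    have "(\<Prod>k\<in>S. ampl a b n \<xi> k * phase \<phi> m k) =
        (\<Prod>k\<in>S. sfun a b k \<xi> * phase \<phi> m k) * (\<Prod>k\<in>S. \<Prod>j\<in>?N - {k}. sfun a b k (b j))"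
      by (simp add: ampl_def prod.distrib ac_simps)
    moreover have "(\<Prod>k\<in>S. sfun a b k \<xi> * phase \<phi> m k) * (\<Prod>k\<in>S. (b k / a k) ^ (n - 1)) =
        (\<Prod>k\<in>S. \<alpha> k / \<beta> k)"
      using weight S by (simp add: prod.distrib[symmetric] subset_iff cong: prod.cong)
    moreover have "(\<Prod>k\<in>S. \<alpha> k / \<beta> k) * (\<Prod>k\<in>?N. \<beta> k) = (\<Prod>k\<in>S. \<alpha> k) * (\<Prod>k\<in>?N - S. \<beta> k)"
    proof -
      have "(\<Prod>k\<in>?N. \<beta> k) = (\<Prod>k\<in>?N - S. \<beta> k) * (\<Prod>k\<in>S. \<beta> k)"
        by (rule prod.subset_diff[OF S]) simp
      moreover have "(\<Prod>k\<in>S. \<beta> k) \<noteq> 0"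
        using S \<beta>0 finite_subset[OF S] by (auto simp: prod_zero_iff)
      ultimately show ?thesis
        by (simp add: prod_dividef)
    qed
    ultimately show ?thesis
      using ampl_pair_product[OF S nz] Vb by (simp add: ac_simps)
  qed
  then show ?thesis
    unfolding Theta_eq_sum_subsets det_mat_weighted_rows_diff sum_distrib_right
    by (intro sum.cong refl) (simp add: ac_simps)
qed

section \<open>The curve and its polynomials\<close>

lemma Dlt_mult_Dlts_on_curve:
  assumes r: "r\<^sup>2 = (of_real (cos \<phi>))\<^sup>2 + K"
  shows "Dlt \<phi> r * Dlts \<phi> r = Dlt \<phi> r + Dlts \<phi> r + K"
proof -
  let ?E = "exp (\<i> * of_real \<phi>)" and ?E' = "exp (- \<i> * of_real \<phi>)"
    and ?c = "of_real (cos \<phi>) :: complex"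
  have "?E * ?E' = 1"
    by (simp add: exp_add[symmetric])
  moreover have "?E + ?E' = 2 * ?c"
    using cis_conv_exp[of \<phi>] cis_conv_exp[of "- \<phi>"] by (simp add: complex_eq_iff)
  ultimately have "?E * ?E' * (r + ?c)\<^sup>2 = (?E + ?E') * (r + ?c) + K"
    using r by (simp add: power2_eq_square algebra_simps)
  then show ?thesis
    unfolding Dlt_def Dlts_def by (simp add: power2_eq_square algebra_simps)
qed

lemma exp_double_eq_Dlt_div_Dlts:
  assumes "Dlt \<phi> r \<noteq> 0"
  shows "exp (2 * \<i> * of_real \<phi>) = Dlt \<phi> r / Dlts \<phi> r"
proof -
  have "r + of_real (cos \<phi>) \<noteq> 0"
    using assms by (simp add: Dlt_def)
  then have "Dlt \<phi> r / Dlts \<phi> r = exp (\<i> * of_real \<phi>) / exp (- \<i> * of_real \<phi>)"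
    by (simp add: Dlt_def Dlts_def)
  also have "\<dots> = exp (2 * \<i> * of_real \<phi>)"
    by (simp add: exp_diff[symmetric] mult.assoc)
  finally show ?thesis ..
qed

(* The recursion comes from b^(q+2) - a^(q+2) = (a + b) (b^(q+1) - a^(q+1)) - a b (b^q - a^q)
   together with a + b = a b - K. *)
fun hpoly :: "'a::comm_ring_1 \<Rightarrow> nat \<Rightarrow> 'a poly" where
  "hpoly K 0 = 0"
| "hpoly K (Suc 0) = 1"
| "hpoly K (Suc (Suc q)) =
    pCons 0 (hpoly K (Suc q)) - smult K (hpoly K (Suc q)) - pCons 0 (hpoly K q)"

lemma poly_hpoly_on_curve:
  assumes curve: "a * b = a + b + K"
  shows "(b - a) * poly (hpoly K q) (a * b) = b ^ q - a ^ q"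
proof (induction q rule: induct_nat_012)
  case (ge2 q)
  have "(b - a) * poly (hpoly K (Suc (Suc q))) (a * b)
     = (a * b - K) * ((b - a) * poly (hpoly K (Suc q)) (a * b))
       - a * b * ((b - a) * poly (hpoly K q) (a * b))"
    by (simp add: algebra_simps)
  also have "\<dots> = (a + b) * (b ^ Suc q - a ^ Suc q) - a * b * (b ^ q - a ^ q)"
    using ge2 curve by simp
  also have "\<dots> = b ^ Suc (Suc q) - a ^ Suc (Suc q)"
    by (simp add: algebra_simps)
  finally show ?case .
qed simp_all

lemma degree_hpoly: "degree (hpoly K q) \<le> q - 1"
proof (induction q rule: induct_nat_012)
  case (ge2 q)
  have "degree (pCons 0 (hpoly K (Suc q))) \<le> Suc q"
    using ge2(2) degree_pCons_le[of 0 "hpoly K (Suc q)"] by simp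
  moreover have "degree (smult K (hpoly K (Suc q))) \<le> Suc q"
    using ge2(2) degree_smult_le[of K "hpoly K (Suc q)"] by simp
  moreover have "degree (pCons 0 (hpoly K q)) \<le> Suc q"
    using ge2(1) degree_pCons_le[of 0 "hpoly K q"] by simp
  ultimately show ?case
    by (simp only: hpoly.simps diff_Suc_1 degree_diff_le)
qed simp_all

lemma coeff_hpoly_top: "coeff (hpoly K (Suc q)) q = 1"
proof (induction q rule: induct_nat_012)
  case (ge2 q)
  have "coeff (hpoly K (Suc (Suc q))) (Suc (Suc q)) = 0" "coeff (hpoly K (Suc q)) (Suc q) = 0"
    using degree_hpoly[of K "Suc (Suc q)"] degree_hpoly[of K "Suc q"]
    by (simp_all add: coeff_eq_0 del: hpoly.simps)
  then show ?case
    using ge2 by simp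
qed simp_all

lemma coeff_hpoly_0: "coeff (hpoly K (Suc q)) 0 = (- K) ^ q"
  by (induction q rule: induct_nat_012) simp_all

lemma degree_pCons_0_hpoly: "degree (pCons 0 (hpoly K q)) \<le> q"
  using degree_hpoly[of K q] degree_pCons_le[of 0 "hpoly K q"] by (cases q) simp_all

definition col_poly :: "'a::comm_ring_1 \<Rightarrow> 'a \<Rightarrow> nat \<Rightarrow> nat \<Rightarrow> 'a poly" where
  "col_poly K \<xi> p i =
    (if p \<le> i then monom 1 p * (hpoly K (Suc (i - p)) - smult \<xi> (hpoly K (i - p)))
     else monom 1 i * (smult \<xi> (hpoly K (p - i)) - pCons 0 (hpoly K (p - i - 1))))"

lemma poly_col_poly_on_curve:
  assumes curve: "a * b = a + b + K"
  shows "a ^ p * b ^ i * (b - \<xi>) - b ^ p * a ^ i * (a - \<xi>) =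
    (b - a) * poly (col_poly K \<xi> p i) (a * b)"
proof (cases "p \<le> i")
  case True
  then obtain d where i: "i = p + d"
    using le_Suc_ex by blast
  have "(b - a) * poly (col_poly K \<xi> p i) (a * b) = (a * b) ^ p *
      ((b - a) * poly (hpoly K (Suc d)) (a * b) - \<xi> * ((b - a) * poly (hpoly K d) (a * b)))"
    unfolding col_poly_def using True i by (simp add: poly_monom algebra_simps del: hpoly.simps)
  also have "\<dots> = a ^ p * b ^ i * (b - \<xi>) - b ^ p * a ^ i * (a - \<xi>)"
    unfolding poly_hpoly_on_curve[OF curve] i
    by (simp add: power_add power_mult_distrib algebra_simps)
  finally show ?thesis by simp
next
  case False
  then obtain r where p: "p = i + Suc r"
    by (metis add_Suc_right less_imp_Suc_add not_le)
  have "(b - a) * poly (col_poly K \<xi> p i) (a * b) = (a * b) ^ i *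
      (\<xi> * ((b - a) * poly (hpoly K (Suc r)) (a * b))
        - a * b * ((b - a) * poly (hpoly K r) (a * b)))"
    unfolding col_poly_def using False p by (simp add: poly_monom algebra_simps del: hpoly.simps)
  also have "\<dots> = a ^ p * b ^ i * (b - \<xi>) - b ^ p * a ^ i * (a - \<xi>)"
    unfolding poly_hpoly_on_curve[OF curve] p
    by (simp add: power_add power_mult_distrib algebra_simps)
  finally show ?thesis by simp
qed

lemma coeff_col_poly:
  "coeff (col_poly K \<xi> p i) l =
    (if p \<le> i then
       if l < p then 0 else coeff (hpoly K (Suc (i - p)) - smult \<xi> (hpoly K (i - p))) (l - p)
     else
       if l < i then 0 else coeff (smult \<xi> (hpoly K (p - i)) - pCons 0 (hpoly K (p - i - 1))) (l - i))"
  unfolding col_poly_def by (simp add: coeff_monom_mult del: hpoly.simps)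

lemma col_poly_support:
  assumes nz: "coeff (col_poly K \<xi> p i) l \<noteq> 0"
  shows "if p \<le> i then p \<le> l \<and> l \<le> i else i \<le> l \<and> l < p"
proof (cases "p \<le> i")
  case True
  let ?Q = "hpoly K (Suc (i - p)) - smult \<xi> (hpoly K (i - p))"
  have "degree ?Q \<le> i - p"
    using degree_hpoly[of K "Suc (i - p)"] degree_hpoly[of K "i - p"]
      degree_smult_le[of \<xi> "hpoly K (i - p)"]
    by (intro degree_diff_le) auto
  moreover have "p \<le> l" and "coeff ?Q (l - p) \<noteq> 0"
    using nz True by (simp_all add: coeff_col_poly split: if_splits)
  ultimately show ?thesis
    using True le_degree[of ?Q "l - p"] by simp
next
  case False
  let ?Q = "smult \<xi> (hpoly K (p - i)) - pCons 0 (hpoly K (p - i - 1))"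
  have "degree ?Q \<le> p - i - 1"
    using degree_hpoly[of K "p - i"] degree_smult_le[of \<xi> "hpoly K (p - i)"]
      degree_pCons_0_hpoly[of K "p - i - 1"]
    by (intro degree_diff_le) auto
  moreover have "i \<le> l" and "coeff ?Q (l - i) \<noteq> 0"
    using nz False by (simp_all add: coeff_col_poly split: if_splits)
  ultimately show ?thesis
    using False le_degree[of ?Q "l - i"] by simp
qed

lemma coeff_col_poly_diag:
  "coeff (col_poly K \<xi> p i) i = (if p \<le> i then 1 else \<xi> * (- K) ^ (p - i - 1))"
proof (cases "p \<le> i")
  case True
  have "coeff (hpoly K (i - p)) (i - p) = 0"
    using degree_hpoly[of K "i - p"] by (cases "i - p") (simp_all add: coeff_eq_0)
  then show ?thesis
    using True coeff_hpoly_top[of K "i - p"] by (simp add: coeff_col_poly del: hpoly.simps)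
next
  case False
  then obtain r where p: "p = Suc (i + r)"
    using less_imp_Suc_add[of i p] by auto
  then show ?thesis
    using coeff_hpoly_0[of K r] by (simp add: coeff_col_poly del: hpoly.simps)
qed

lemma coeff_col_poly_top:
  assumes "Suc i < p"
  shows "coeff (col_poly K \<xi> p i) (p - 1) = \<xi> - 1"
proof -
  obtain r where p: "p = Suc (Suc (i + r))"
    using less_imp_Suc_add[OF assms] by auto
  show ?thesis
    using coeff_hpoly_top[of K "Suc r"] coeff_hpoly_top[of K r]
    by (simp add: coeff_col_poly p del: hpoly.simps)
qed

lemma degree_col_poly_less:
  assumes i: "i < n" and p: "p \<le> n \<or> p = Suc n \<and> \<xi> = 1"
  shows "degree (col_poly K \<xi> p i) < n"
proof -
  have "coeff (col_poly K \<xi> p i) l = 0" if "n - 1 < l" for l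
  proof (rule ccontr)
    assume nz: "coeff (col_poly K \<xi> p i) l \<noteq> 0"
    from col_poly_support[OF nz] i p that have "p = Suc n" "l = n" "\<xi> = 1"
      by (auto split: if_splits)
    then show False
      using nz coeff_col_poly_top[of i p K \<xi>] i by simp
  qed
  then have "degree (col_poly K \<xi> p i) \<le> n - 1"
    by (intro degree_le) blast
  then show ?thesis
    using i by linarith
qed

lemma sum_lessThan_id: "(\<Sum>l<p. l) = p * (p - 1) div (2::nat)"
  by (cases p) (simp_all add: lessThan_Suc_atMost atMost_atLeast0 gauss_sum_nat mult.commute)

lemma det_col_poly_coeffs:
  assumes p: "p \<le> n \<or> p = Suc n \<and> \<xi> = 1"
  shows "det (mat n n (\<lambda>(l,i). coeff (col_poly K \<xi> p i) l)) = \<xi> ^ p * (- K) ^ (p * (p - 1) div 2)"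
proof -
  \<comment> \<open>ordering the indices as p - 1, ..., 1, 0, p, p + 1, ... makes the matrix triangular\<close>
  define \<rho> where "\<rho> t = (if t < p then p - 1 - t else t)" for t
  have "inj_on \<rho> {0..<n}"
    by (auto simp: \<rho>_def inj_on_def split: if_splits)
  moreover have "\<rho> l \<le> \<rho> i" if "coeff (col_poly K \<xi> p i) l \<noteq> 0" for l i
    using col_poly_support[OF that] by (auto simp: \<rho>_def split: if_splits)
  ultimately have "det (mat n n (\<lambda>(l,i). coeff (col_poly K \<xi> p i) l)) =
      (\<Prod>l<n. coeff (col_poly K \<xi> p l) l)"
    by (rule det_mat_eq_prod_diag_if_triangular_wrt)
  also have "\<dots> = (\<Prod>l<p. \<xi> * (- K) ^ (p - Suc l))"
    using p
  proof
    assume "p \<le> n"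
    then show ?thesis
      by (intro prod.mono_neutral_cong_right) (auto simp: coeff_col_poly_diag)
  next
    assume "p = Suc n \<and> \<xi> = 1"
    then show ?thesis
      by (simp add: coeff_col_poly_diag)
  qed
  also have "\<dots> = \<xi> ^ p * (- K) ^ (\<Sum>l<p. l)"
    by (simp add: prod.distrib power_sum prod.nat_diff_reindex[where g = "\<lambda>l. (- K) ^ l"])
  finally show ?thesis
    by (simp add: sum_lessThan_id)
qed

lemma det_mat_curve_rows:
  fixes a b :: "nat \<Rightarrow> 'a::comm_ring_1"
  assumes curve: "\<forall>k\<in>{1..n}. a k * b k = a k + b k + K"
    and p: "p \<le> n \<or> p = Suc n \<and> \<xi> = 1"
  shows "det (mat n n (\<lambda>(k,i). a (Suc k) ^ p * (b (Suc k) - \<xi>) * b (Suc k) ^ i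
      - b (Suc k) ^ p * (a (Suc k) - \<xi>) * a (Suc k) ^ i))
    = (\<Prod>k\<in>{1..n}. b k - a k) * vandermonde n (\<lambda>k. a k * b k)
      * (\<xi> ^ p * (- K) ^ (p * (p - 1) div 2))"
proof -
  let ?P = "col_poly K \<xi> p" and ?x = "\<lambda>k. a (Suc k) * b (Suc k)"
  have entry: "a (Suc k) ^ p * (b (Suc k) - \<xi>) * b (Suc k) ^ i
      - b (Suc k) ^ p * (a (Suc k) - \<xi>) * a (Suc k) ^ i
      = (b (Suc k) - a (Suc k)) * poly (?P i) (?x k)" if "k < n" for k i
  proof -
    have "a (Suc k) * b (Suc k) = a (Suc k) + b (Suc k) + K"
      using curve that by simp
    from poly_col_poly_on_curve[OF this, of p i \<xi>] show ?thesis
      by (simp add: ac_simps)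
  qed
  have "mat n n (\<lambda>(k,i). a (Suc k) ^ p * (b (Suc k) - \<xi>) * b (Suc k) ^ i
      - b (Suc k) ^ p * (a (Suc k) - \<xi>) * a (Suc k) ^ i)
    = mat n n (\<lambda>(k,i). (b (Suc k) - a (Suc k)) * poly (?P i) (?x k))"
    by (rule eq_matI) (simp_all add: entry)
  then have "det (mat n n (\<lambda>(k,i). a (Suc k) ^ p * (b (Suc k) - \<xi>) * b (Suc k) ^ i
      - b (Suc k) ^ p * (a (Suc k) - \<xi>) * a (Suc k) ^ i))
    = (\<Prod>k<n. b (Suc k) - a (Suc k)) * (det (mat n n (\<lambda>(k,i). ?x k ^ i))
      * det (mat n n (\<lambda>(l,i). coeff (?P i) l)))"
    using degree_col_poly_less[OF _ p]
    by (simp add: det_mat_scale_rows[of n "\<lambda>k. b (Suc k) - a (Suc k)"] det_mat_poly_eval)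
  also have "(\<Prod>k<n. b (Suc k) - a (Suc k)) = (\<Prod>k\<in>{1..n}. b k - a k)"
    by (simp add: prod.atLeast1_atMost_eq)
  finally show ?thesis
    by (simp add: vandermonde_eq_det det_col_poly_coeffs[OF p])
qed

lemma phase_eq_power_int:
  assumes "exp (2 * \<i> * of_real (\<phi> k)) = z"
  shows "phase \<phi> m k = z powi m"
proof -
  have "phase \<phi> m k = exp (of_int m * (2 * \<i> * of_real (\<phi> k)))"
    unfolding phase_def by (simp add: ac_simps)
  then show ?thesis
    by (simp add: exp_power_int[symmetric] assms)
qed

lemma ampl_weight:
  fixes a b \<xi> :: complex
  assumes "a \<noteq> 0" "b \<noteq> 0" "b \<noteq> \<xi>" "1 \<le> n"
  shows "b / a * ((a - \<xi>) / (b - \<xi>)) * (a / b) powi (int n - int p) * (b / a) ^ (n - 1) =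
    b ^ p * (a - \<xi>) / (a ^ p * (b - \<xi>))"
proof -
  obtain n' where n: "n = Suc n'"
    using assms(4) by (cases n) auto
  have "(a / b) powi (int n - int p) = (a / b) ^ n / (a / b) ^ p"
    using assms by (simp add: power_int_diff)
  then show ?thesis
    using assms by (simp add: n power_divide field_simps)
qed

section \<open>Theta at the amplitudes f_k\<close>

context
  fixes a b :: "nat \<Rightarrow> complex" and K \<xi> :: complex and \<phi> :: "nat \<Rightarrow> real" and n :: nat
  assumes curve: "\<forall>k\<in>{1..n}. a k * b k = a k + b k + K"
    and phase: "\<forall>k\<in>{1..n}. exp (2 * \<i> * of_real (\<phi> k)) = a k / b k"
    and nz1: "\<forall>k\<in>{1..n}. a k \<noteq> 0 \<and> b k \<noteq> 0 \<and> b k \<noteq> \<xi>"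
    and nz2: "\<forall>j\<in>{1..n}. \<forall>k\<in>{1..n}. j \<noteq> k \<longrightarrow> a j \<noteq> b k \<and> b j \<noteq> b k"
begin

lemma Theta_ampl_formula:
  assumes p: "p \<le> n \<or> p = Suc n \<and> \<xi> = 1"
  shows "Theta a b \<phi> n (int n - int p) (ampl a b n \<xi>) * (\<Prod>k\<in>{1..n}. a k) ^ p
      * (\<Prod>k\<in>{1..n}. b k - \<xi>) * vandermonde n b
    = (\<Prod>k\<in>{1..n}. b k - a k) * vandermonde n (\<lambda>k. a k * b k)
      * (\<xi> ^ p * (- K) ^ (p * (p - 1) div 2))"
proof -
  let ?\<beta> = "\<lambda>k. a k ^ p * (b k - \<xi>)" and ?\<alpha> = "\<lambda>k. b k ^ p * (a k - \<xi>)"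
  have weight: "\<forall>k\<in>{1..n}.
      sfun a b k \<xi> * phase \<phi> (int n - int p) k * (b k / a k) ^ (n - 1) = ?\<alpha> k / ?\<beta> k"
  proof
    fix k assume k: "k \<in> {1..n}"
    have "phase \<phi> (int n - int p) k = (a k / b k) powi (int n - int p)"
      using phase k by (intro phase_eq_power_int) simp
    then show "sfun a b k \<xi> * phase \<phi> (int n - int p) k * (b k / a k) ^ (n - 1) = ?\<alpha> k / ?\<beta> k"
      unfolding sfun_def by (simp only:) (rule ampl_weight, use nz1 k in auto)
  qed
  have "\<forall>k\<in>{1..n}. ?\<beta> k \<noteq> 0"
    using nz1 by simp
  then have "Theta a b \<phi> n (int n - int p) (ampl a b n \<xi>) * (\<Prod>k\<in>{1..n}. ?\<beta> k) * vandermonde n b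
      = det (mat n n (\<lambda>(k,i). ?\<beta> (Suc k) * b (Suc k) ^ i - ?\<alpha> (Suc k) * a (Suc k) ^ i))"
    using Theta_ampl_eq_det[OF nz2 _ weight] by blast
  also have "\<dots> = (\<Prod>k\<in>{1..n}. b k - a k) * vandermonde n (\<lambda>k. a k * b k)
      * (\<xi> ^ p * (- K) ^ (p * (p - 1) div 2))"
    using det_mat_curve_rows[OF curve p] by (simp add: ac_simps)
  finally show ?thesis
    by (simp add: prod.distrib prod_power_distrib ac_simps)
qed

lemma Theta_ampl_ratio:
  assumes p: "p \<le> n \<or> p = Suc n \<and> \<xi> = 1"
  shows "Theta a b \<phi> n (int n - int p) (ampl a b n \<xi>) =
    (- K) ^ (p * (p - 1) div 2) * (\<xi> / (\<Prod>k\<in>{1..n}. a k)) ^ p * Theta a b \<phi> n (int n) (ampl a b n \<xi>)"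
proof -
  let ?T = "\<lambda>m. Theta a b \<phi> n m (ampl a b n \<xi>)"
  define A where "A = (\<Prod>k\<in>{1..n}. a k)"
  define Q where "Q = (\<Prod>k\<in>{1..n}. b k - \<xi>) * vandermonde n b"
  define R where "R = (\<Prod>k\<in>{1..n}. b k - a k) * vandermonde n (\<lambda>k. a k * b k)"
  define c where "c = \<xi> ^ p * (- K) ^ (p * (p - 1) div 2)"
  have "A \<noteq> 0"
    using nz1 by (simp add: A_def)
  have "Q \<noteq> 0"
    using nz1 vandermonde_nonzero[of n b] nz2 by (simp add: Q_def)
  have "?T (int n - int p) * A ^ p * Q = R * c"
    using Theta_ampl_formula[OF p]
    unfolding A_def Q_def R_def c_def by (simp only: mult.assoc)
  also have "R = ?T (int n) * Q"
    using Theta_ampl_formula[of 0]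
    unfolding Q_def R_def by (simp add: mult.assoc)
  finally have "(?T (int n - int p) * A ^ p) * Q = (?T (int n) * c) * Q"
    by (simp only: ac_simps)
  then have "?T (int n - int p) = ?T (int n) * c / A ^ p"
    using \<open>A \<noteq> 0\<close> \<open>Q \<noteq> 0\<close> by (simp add: eq_divide_eq)
  then show ?thesis
    unfolding A_def[symmetric] c_def by (simp add: power_divide)
qed

lemma Theta_ampl_top:
  "Theta a b \<phi> n (int n) (ampl a b n \<xi>) = (\<Prod>k\<in>{1..n}. (b k - a k) / (b k - \<xi>))
    * (\<Prod>j\<in>{1..n}. \<Prod>k\<in>{j<..n}. (a j * b j - a k * b k) / (b j - b k))"
proof -
  have "(\<Prod>k\<in>{1..n}. b k - \<xi>) \<noteq> 0" "vandermonde n b \<noteq> 0"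
    using nz1 nz2 vandermonde_nonzero[of n b] by auto
  moreover have "Theta a b \<phi> n (int n) (ampl a b n \<xi>) * (\<Prod>k\<in>{1..n}. b k - \<xi>) * vandermonde n b
      = (\<Prod>k\<in>{1..n}. b k - a k) * vandermonde n (\<lambda>k. a k * b k)"
    using Theta_ampl_formula[of 0] by simp
  ultimately have "Theta a b \<phi> n (int n) (ampl a b n \<xi>) =
      (\<Prod>k\<in>{1..n}. b k - a k) / (\<Prod>k\<in>{1..n}. b k - \<xi>)
      * (vandermonde n (\<lambda>k. a k * b k) / vandermonde n b)"
    by (simp add: field_simps)
  then show ?thesis
    by (simp add: prod_dividef vandermonde_divide)
qed

end

theorem mainTheorem2:
  fixes M n :: nat and p :: "nat \<Rightarrow> nat" and K \<xi> :: complex and r :: "nat \<Rightarrow> complex"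
    and \<phi> :: "nat \<Rightarrow> real" and D Ds \<Lambda> f :: "nat \<Rightarrow> complex"
  assumes M: "M \<ge> 2"
    and n: "1 \<le> n" "n \<le> M - 1"
    and p_range: "\<forall>k\<in>{1..n}. p k \<in> {1..M-1}"
    and p_inj: "inj_on p {1..n}"
    and phi_def: "\<phi> = (\<lambda>k. real (p k) * pi / real M)"
    and r_sq: "\<forall>k\<in>{1..n}. (r k)^2 = (of_real (cos (\<phi> k)))^2 + K"
    and D_def: "D = (\<lambda>k. Dlt (\<phi> k) (r k))"
    and Ds_def: "Ds = (\<lambda>k. Dlts (\<phi> k) (r k))"
    and L_def: "\<Lambda> = (\<lambda>k. D k * Ds k)"
    and f_def: "f = ampl D Ds n \<xi>"
    and nz1: "\<forall>k\<in>{1..n}. D k \<noteq> 0 \<and> Ds k \<noteq> 0 \<and> Ds k \<noteq> \<xi>"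
    and nz2: "\<forall>j\<in>{1..n}. \<forall>k\<in>{1..n}. j \<noteq> k \<longrightarrow> D j \<noteq> Ds k \<and> Ds j \<noteq> Ds k"
  shows "Theta D Ds \<phi> n (int n) f =
           (\<Prod>k=1..n. (Ds k - D k) / (Ds k - \<xi>))
           * (\<Prod>j=1..n. \<Prod>k\<in>{j<..n}. (\<Lambda> j - \<Lambda> k) / (Ds j - Ds k))
         \<and> (\<forall>m\<le>n. Theta D Ds \<phi> n (int m) f =
           (- K) ^ ((n - m) * (n - m - 1) div 2) * (\<xi> / (\<Prod>k=1..n. D k)) ^ (n - m)
           * Theta D Ds \<phi> n (int n) f)
         \<and> (\<xi> = 1 \<longrightarrow> Theta D Ds \<phi> n (-1) f =
           (- K) ^ ((n + 1) * n div 2) * (\<xi> / (\<Prod>k=1..n. D k)) ^ (n + 1)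
           * Theta D Ds \<phi> n (int n) f)"
proof -
  \<comment> \<open>only the curve relation and the phases are used\<close>
  have curve: "\<forall>k\<in>{1..n}. D k * Ds k = D k + Ds k + K"
    using r_sq Dlt_mult_Dlts_on_curve unfolding D_def Ds_def by blast
  have phase: "\<forall>k\<in>{1..n}. exp (2 * \<i> * of_real (\<phi> k)) = D k / Ds k"
    using nz1 exp_double_eq_Dlt_div_Dlts unfolding D_def Ds_def by blast
  note ratio = Theta_ampl_ratio[OF curve phase nz1 nz2]
  have "Theta D Ds \<phi> n (int n) f = (\<Prod>k=1..n. (Ds k - D k) / (Ds k - \<xi>))
      * (\<Prod>j=1..n. \<Prod>k\<in>{j<..n}. (\<Lambda> j - \<Lambda> k) / (Ds j - Ds k))"
    using Theta_ampl_top[OF curve phase nz1 nz2] by (simp add: f_def L_def)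
  moreover have "Theta D Ds \<phi> n (int m) f = (- K) ^ ((n - m) * (n - m - 1) div 2)
      * (\<xi> / (\<Prod>k=1..n. D k)) ^ (n - m) * Theta D Ds \<phi> n (int n) f" if "m \<le> n" for m
    using ratio[of "n - m"] that by (simp add: f_def of_nat_diff)
  moreover have "\<xi> = 1 \<longrightarrow> Theta D Ds \<phi> n (-1) f = (- K) ^ ((n + 1) * n div 2)
      * (\<xi> / (\<Prod>k=1..n. D k)) ^ (n + 1) * Theta D Ds \<phi> n (int n) f"
    using ratio[of "Suc n"] by (simp add: f_def)
  ultimately show ?thesis
    by blast
qed

end
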